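(* Let $v,w,\Delta$ be nonnegative integers with $w\ge1$ and $v+\Delta\le w$. Then for every $0<\lambda\le1$, \[ \varPhi_{v,\Delta}(\lambda)\le\left(\frac{(1+\lambda)^w}{1+\lambda^w}\right)^{v/w}. \]
   Context: For nonnegative integers $v,\Delta$ and $0<\lambda\le 1$, the local factor is \[ \varPhi_{v,\Delta}(\lambda)=\frac{\sum_{t=0}^v\binom vt\lambda^{\min\{t,\,\Delta+v-t\}}}{1+\lambda^{\Delta}}. \] *)

theory Defs
  imports Complex_Main
begin

definition Phi :: "nat \<Rightarrow> nat \<Rightarrow> real \<Rightarrow> real" where
  "Phi v D lam =
     (\<Sum>t = 0..v. real (v choose t) * lam ^ (min t (D + v - t))) / (1 + lam ^ D)"

end

theory Submission
  imports Defs
begin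

text \<open>Write \<open>s = \<Delta> + v - t\<close>; since \<open>|s - t| \<le> \<Delta> + v \<le> w\<close> and \<open>\<lambda> \<le> 1\<close>, each term
  \<open>\<lambda>^min(t,s) (1 + \<lambda>^w)\<close> is at most \<open>\<lambda>^t + \<lambda>^s\<close>. Summing against \<open>binom(v,t)\<close> gives
  two binomial sums, \<open>(1 + \<lambda>)^v (1 + \<lambda>^\<Delta>)\<close>, hence \<open>\<Phi>_{v,\<Delta>}(\<lambda>) \<le> (1 + \<lambda>)^v / (1 + \<lambda>^w)\<close>.
  Finally, raising the denominator \<open>1 + \<lambda>^w \<ge> 1\<close> to the power \<open>v/w \<le> 1\<close> can only
  decrease it.\<close>

lemma power_min_mult_one_plus_power_le:
  fixes x :: real
  assumes "0 \<le> x" "x \<le> 1" "max m n \<le> min m n + w"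
  shows "x ^ min m n * (1 + x ^ w) \<le> x ^ m + x ^ n"
proof -
  have "x ^ (min m n + w) \<le> x ^ max m n"
    using assms by (intro power_decreasing) auto
  then have "x ^ min m n * (1 + x ^ w) \<le> x ^ min m n + x ^ max m n"
    by (simp add: algebra_simps power_add)
  then show ?thesis
    by (cases "m \<le> n") (auto simp: min_def max_def)
qed

lemma binomial_sum_power: "(\<Sum>t = 0..v. real (v choose t) * x ^ t) = (1 + x) ^ v"
  using binomial_ring[of x 1 v] by (simp add: add.commute atLeast0AtMost)

lemma binomial_sum_power_reflected:
  "(\<Sum>t = 0..v. real (v choose t) * x ^ (D + v - t)) = x ^ D * (1 + x) ^ v"
proof -
  have "(\<Sum>t = 0..v. real (v choose t) * x ^ (D + v - t))
      = x ^ D * (\<Sum>t = 0..v. real (v choose t) * 1 ^ t * x ^ (v - t))"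
    unfolding sum_distrib_left
    by (intro sum.cong refl) (auto simp: power_add[symmetric])
  also have "\<dots> = x ^ D * (1 + x) ^ v"
    using binomial_ring[of 1 x v] by (simp add: atLeast0AtMost)
  finally show ?thesis .
qed

lemma Phi_le_binomial_ratio:
  fixes lam :: real
  assumes "v + D \<le> w" "0 < lam" "lam \<le> 1"
  shows "Phi v D lam \<le> (1 + lam) ^ v / (1 + lam ^ w)"
proof -
  define N where "N = (\<Sum>t = 0..v. real (v choose t) * lam ^ min t (D + v - t))"
  have "N * (1 + lam ^ w)
      = (\<Sum>t = 0..v. real (v choose t) * (lam ^ min t (D + v - t) * (1 + lam ^ w)))"
    unfolding N_def by (simp add: sum_distrib_left sum.distrib algebra_simps)
  also have "\<dots> \<le> (\<Sum>t = 0..v. real (v choose t) * (lam ^ t + lam ^ (D + v - t)))"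
    using assms by (intro sum_mono mult_left_mono power_min_mult_one_plus_power_le) auto
  also have "\<dots> = (1 + lam) ^ v * (1 + lam ^ D)"
    by (simp add: distrib_left sum.distrib binomial_sum_power binomial_sum_power_reflected
        algebra_simps del: mult.commute)
  finally have "N * (1 + lam ^ w) \<le> (1 + lam) ^ v * (1 + lam ^ D)" .
  moreover have "0 < 1 + lam ^ w" "0 < 1 + lam ^ D"
    using assms by (auto intro: add_pos_nonneg)
  ultimately show ?thesis
    unfolding Phi_def N_def[symmetric] by (simp add: divide_simps mult.commute)
qed

lemma power_div_le_powr_ratio:
  fixes b c :: real
  assumes "0 < b" "1 \<le> c" "v \<le> w" "1 \<le> w"
  shows "b ^ v / c \<le> (b ^ w / c) powr (real v / real w)"
proof -
  have "c powr (real v / real w) \<le> c powr 1"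
    using assms by (intro powr_mono) auto
  moreover have "(b ^ w) powr (real v / real w) = b ^ v"
    using assms by (simp add: powr_realpow[symmetric] powr_powr)
  moreover have "0 < c powr (real v / real w)"
    using assms by simp
  ultimately show ?thesis
    using assms by (simp add: powr_divide frac_le)
qed

theorem lemma10:
  fixes v w D :: nat and lam :: real
  assumes "w \<ge> 1" and "v + D \<le> w" and "0 < lam" and "lam \<le> 1"
  shows "Phi v D lam \<le> ((1 + lam) ^ w / (1 + lam ^ w)) powr (real v / real w)"
proof -
  have "Phi v D lam \<le> (1 + lam) ^ v / (1 + lam ^ w)"
    using assms by (intro Phi_le_binomial_ratio)
  also have "\<dots> \<le> ((1 + lam) ^ w / (1 + lam ^ w)) powr (real v / real w)"
    using assms by (intro power_div_le_powr_ratio) auto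
  finally show ?thesis .
qed

end
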